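(* For all $w,v\in\mathbb{C}$: $S_n(w;v)/\sqrt{n}$ remains bounded as real $n\to\infty$ if and only if $w\notin\mathcal{Z}$. Also (for $w\neq0$) $T_n(w;v)/\sqrt{n}$ remains bounded as $n\to\infty$ if and only if $w\notin\mathcal{Y}$.
   Context: Principal logarithm branch (arguments in $(-\pi,\pi]$); $(nw)^{-(n+v)}=e^{-(n+v)\log n}e^{-(n+v)\log w}$. For real $n>0$ with $\mathrm{Re}(n+v)>-1$: $S_n(w;v)=1+nw\int_0^1 e^{nw(1-z)}z^{n+v}\,dz$ and, for $w\ne0$, $T_n(w;v)=e^{nw}(nw)^{-(n+v)}\Gamma(n+v+1)-S_n(w;v)$. Regions: $\mathcal{Y}=\{w:|we^{1-w}|<1,\ \mathrm{Re}(w)<1\}$ and $\mathcal{Z}=\{w:|we^{1-w}|<1,\ \mathrm{Re}(w)>1\}$. *)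

theory Defs
  imports "HOL-Analysis.Analysis"
begin

definition S_fun :: "real \<Rightarrow> complex \<Rightarrow> complex \<Rightarrow> complex" where
  "S_fun n w v = 1 + of_real n * w *
     integral {0..1} (\<lambda>z::real. exp (of_real n * w * (1 - of_real z)) * (of_real z) powr (of_real n + v))"

text \<open>(n w)^{-(n+v)} := e^{-(n+v) log n} e^{-(n+v) log w} (principal log).\<close>
definition nw_pow :: "real \<Rightarrow> complex \<Rightarrow> complex \<Rightarrow> complex" where
  "nw_pow n w v = exp (- (of_real n + v) * of_real (ln n)) * exp (- (of_real n + v) * Ln w)"

definition T_fun :: "real \<Rightarrow> complex \<Rightarrow> complex \<Rightarrow> complex" where
  "T_fun n w v = exp (of_real n * w) * nw_pow n w v * Gamma (of_real n + v + 1) - S_fun n w v"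

definition regionY :: "complex set" where
  "regionY = {w. cmod (w * exp (1 - w)) < 1 \<and> Re w < 1}"

definition regionZ :: "complex set" where
  "regionZ = {w. cmod (w * exp (1 - w)) < 1 \<and> Re w > 1}"

definition bounded_at_top :: "(real \<Rightarrow> complex) \<Rightarrow> bool" where
  "bounded_at_top f \<longleftrightarrow> (\<exists>C. \<forall>\<^sub>F n in at_top. cmod (f n) \<le> C)"

end

theory Submission
  imports Defs "HOL-Complex_Analysis.Cauchy_Integral_Theorem"
begin

definition Gamma_scaled :: "real \<Rightarrow> real \<Rightarrow> real" where
  "Gamma_scaled c n = exp n * n powr (-(n + c)) * Gamma (n + c + 1)"

lemma Gamma_scaled_pos: "0 < n \<Longrightarrow> 0 < n + c + 1 \<Longrightarrow> 0 < Gamma_scaled c n"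
  by (simp add: Gamma_scaled_def Gamma_real_pos)

lemma Gamma_scaled_0_step:
  assumes m: "0 < m"
  shows "Gamma_scaled 0 (m + 1) = exp (1 - m * ln (1 + 1/m)) * Gamma_scaled 0 m"
proof -
  have "Gamma (m + 1 + 1) = (m + 1) * Gamma (m + 1)"
    using m by (intro Gamma_plus1) (auto elim!: nonpos_Ints_cases)
  hence "Gamma_scaled 0 (m + 1) = exp (m + 1) * ((m + 1) powr (-(m + 1) + 1)) * Gamma (m + 1)"
    unfolding powr_add using m by (simp add: Gamma_scaled_def)
  also have "(m + 1) powr (-(m + 1) + 1) = exp (- m * ln (1 + 1/m)) * m powr (-m)"
  proof -
    have "ln (1 + 1/m) = ln (m + 1) - ln m"
      using m by (simp add: field_simps ln_div)
    then show ?thesis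
      using m by (simp only: powr_def) (simp add: exp_add [symmetric] algebra_simps)
  qed
  finally show ?thesis
    by (simp add: Gamma_scaled_def exp_add exp_diff exp_minus field_simps)
qed

lemma ln_add_one_ge:
  fixes x :: real assumes "0 \<le> x" shows "2 * x / (2 + x) \<le> ln (1 + x)"
proof -
  define h where "h x = ln (1 + x) - 2 * x / (2 + x)" for x :: real
  have h': "(h has_real_derivative x^2 / ((1 + x) * (2 + x)^2)) (at x)" if "0 \<le> x" for x :: real
  proof -
    have "(h has_real_derivative 1 / (1 + x) - (2 * (2 + x) - 2 * x) / (2 + x)^2) (at x)"
      unfolding h_def using that
      by (auto intro!: derivative_eq_intros simp: power2_eq_square field_simps)
    moreover have "1 / (1 + x) - (2 * (2 + x) - 2 * x) / (2 + x)^2 = x^2 / ((1 + x) * (2 + x)^2)"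
      using that by (simp add: divide_simps power2_eq_square) algebra
    ultimately show ?thesis by simp
  qed
  have "h 0 \<le> h x"
  proof (rule DERIV_nonneg_imp_increasing_open[of 0 x h])
    fix y :: real assume "0 < y" "y < x"
    thus "\<exists>D. (h has_real_derivative D) (at y) \<and> 0 \<le> D" using h'[of y] by auto
  qed (use assms h' in \<open>auto intro!: DERIV_continuous continuous_at_imp_continuous_on\<close>)
  thus ?thesis by (simp add: h_def)
qed

lemma unit_shift_mono_attains_Inf:
  fixes f :: "real \<Rightarrow> real"
  assumes cont: "continuous_on {a..a+1} f" and step: "\<And>x. a \<le> x \<Longrightarrow> f x \<le> f (x + 1)"
  obtains y where "y \<in> {a..a+1}" "\<And>x. a \<le> x \<Longrightarrow> f y \<le> f x"
proof -
  obtain y where y: "y \<in> {a..a+1}" "\<And>x. x \<in> {a..a+1} \<Longrightarrow> f y \<le> f x"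
    using continuous_attains_inf[OF compact_Icc _ cont] by auto
  have shift: "f (x - real k) \<le> f x" if "a \<le> x - real k" for x k
    using that
  proof (induction k arbitrary: x)
    case (Suc k)
    from Suc.prems have "f (x - real (Suc k)) \<le> f (x - real k)"
      using step[of "x - real (Suc k)"] by (simp add: algebra_simps)
    also have "\<dots> \<le> f x" using Suc by simp
    finally show ?case .
  qed simp
  have "f y \<le> f x" if "a \<le> x" for x
  proof -
    define k where "k = nat \<lfloor>x - a\<rfloor>"
    have "x - real k \<in> {a..a+1}"
      using that by (simp add: k_def) linarith
    thus ?thesis using y(2) shift[of x k] by fastforce
  qed
  with y(1) show ?thesis by (rule that)
qed

lemma Gamma_scaled_0_le_step:
  assumes m: "0 < m"
  shows "Gamma_scaled 0 m \<le> Gamma_scaled 0 (m + 1)"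
proof -
  have "m * ln (1 + 1/m) \<le> 1"
    using ln_add_one_self_le_self[of "1/m"] m by (simp add: field_simps)
  thus ?thesis
    using Gamma_scaled_0_step[OF m] Gamma_scaled_pos[of m 0] m by simp
qed

lemma Gamma_scaled_0_div_sqrt_step_le:
  assumes m: "0 < m"
  shows "Gamma_scaled 0 (m + 1) / sqrt (m + 1) \<le> Gamma_scaled 0 m / sqrt m"
proof -
  have "1 = (m + 1/2) * (2 * (1/m) / (2 + 1/m))" using m by (simp add: field_simps)
  also have "\<dots> \<le> (m + 1/2) * ln (1 + 1/m)"
    using m by (intro mult_left_mono ln_add_one_ge) auto
  finally have "exp (1 - m * ln (1 + 1/m)) \<le> exp (ln (1 + 1/m) / 2)"
    by (simp add: algebra_simps)
  also have "\<dots> = sqrt (1 + 1/m)"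
  proof -
    have "0 < 1 + 1/m" using m by (simp add: add_pos_pos)
    thus ?thesis by (simp add: powr_half_sqrt [symmetric] powr_def)
  qed
  also have "\<dots> = sqrt (m + 1) / sqrt m"
    using m by (simp add: real_sqrt_divide [symmetric] field_simps)
  finally have "exp (1 - m * ln (1 + 1/m)) * Gamma_scaled 0 m / sqrt (m + 1) \<le> Gamma_scaled 0 m / sqrt m"
    using Gamma_scaled_pos[of m 0] m by (simp add: field_simps)
  thus ?thesis
    using Gamma_scaled_0_step[OF m] by simp
qed

lemma Gamma_scaled_0_bounds:
  obtains A D where "0 < D" "\<And>m. 1 \<le> m \<Longrightarrow> D \<le> Gamma_scaled 0 m \<and> Gamma_scaled 0 m \<le> A * sqrt m"
proof -
  have cont: "continuous_on {1..1+1} (Gamma_scaled 0)"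
    unfolding Gamma_scaled_def
    by (intro continuous_intros continuous_on_compose2[OF continuous_on_Gamma[of "{1<..}"]])
       (auto elim!: nonpos_Ints_cases)
  obtain y where y: "y \<in> {1..1+1}" "\<And>m. 1 \<le> m \<Longrightarrow> Gamma_scaled 0 y \<le> Gamma_scaled 0 m"
    using unit_shift_mono_attains_Inf[OF cont Gamma_scaled_0_le_step] by auto
  obtain z where z: "z \<in> {1..1+1}" "\<And>m. 1 \<le> m \<Longrightarrow> Gamma_scaled 0 m / sqrt m \<le> Gamma_scaled 0 z / sqrt z"
  proof (rule unit_shift_mono_attains_Inf[of 1 "\<lambda>m. - (Gamma_scaled 0 m / sqrt m)"])
    show "continuous_on {1..1+1} (\<lambda>m. - (Gamma_scaled 0 m / sqrt m))"
      by (intro continuous_intros cont) auto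
  qed (use Gamma_scaled_0_div_sqrt_step_le in auto)
  show ?thesis
  proof (rule that)
    show "0 < Gamma_scaled 0 y" using y by (intro Gamma_scaled_pos) auto
    fix m :: real assume "1 \<le> m"
    with y z show "Gamma_scaled 0 y \<le> Gamma_scaled 0 m \<and> Gamma_scaled 0 m \<le> Gamma_scaled 0 z / sqrt z * sqrt m"
      by (auto simp: field_simps)
  qed
qed

lemma Gamma_scaled_shift:
  assumes n: "0 < n" and m: "0 < n + c"
  shows "Gamma_scaled c n = exp ((n + c) * (ln (n + c) - ln n) - c) * Gamma_scaled 0 (n + c)"
proof -
  have "exp ((n + c) * (ln (n + c) - ln n) - c) * (exp (n + c) * exp (- (n + c) * ln (n + c)))
        = exp n * exp (- (n + c) * ln n)"
    by (simp only: exp_add [symmetric]) (simp add: algebra_simps)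
  with assms show ?thesis
    by (simp add: Gamma_scaled_def powr_def mult.assoc [symmetric])
qed

lemma Gamma_scaled_shift_bounds:
  assumes n: "1 \<le> n" and m: "0 < n + c"
  shows "Gamma_scaled 0 (n + c) \<le> Gamma_scaled c n" and "Gamma_scaled c n \<le> exp (c^2) * Gamma_scaled 0 (n + c)"
proof -
  define m where "m = n + c"
  have "ln (n / m) \<le> n / m - 1" "ln (m / n) \<le> m / n - 1"
    using n m by (intro ln_le_minus_one; simp add: m_def)+
  hence "1 - n / m \<le> ln m - ln n" "ln m - ln n \<le> m / n - 1"
    using n m by (simp_all add: ln_div m_def)
  hence "m * (1 - n / m) \<le> m * (ln m - ln n)" "m * (ln m - ln n) \<le> m * (m / n - 1)"
    using m by (intro mult_left_mono; simp add: m_def)+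
  moreover have "m * (1 - n / m) = c" "m * (m / n - 1) = c + c^2 / n"
    using n m by (simp_all add: m_def field_simps power2_eq_square)
  moreover have "c^2 / n \<le> c^2 / 1"
    using n by (intro divide_left_mono) auto
  ultimately have E: "0 \<le> m * (ln m - ln n) - c" "m * (ln m - ln n) - c \<le> c^2"
    by linarith+
  have G: "Gamma_scaled c n = exp (m * (ln m - ln n) - c) * Gamma_scaled 0 m"
    unfolding m_def using n m by (intro Gamma_scaled_shift) auto
  have G0: "0 < Gamma_scaled 0 m"
    using n m by (intro Gamma_scaled_pos) (auto simp: m_def)
  show "Gamma_scaled 0 (n + c) \<le> Gamma_scaled c n"
    unfolding G m_def [symmetric] using mult_right_mono[of 1 _ "Gamma_scaled 0 m"] E(1) G0 by simp
  show "Gamma_scaled c n \<le> exp (c^2) * Gamma_scaled 0 (n + c)"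
    unfolding G m_def [symmetric] using E(2) G0 by (intro mult_right_mono) auto
qed

lemma Gamma_scaled_eventually_bounds:
  obtains A D where "0 < D" "\<forall>\<^sub>F n in at_top. D \<le> Gamma_scaled c n \<and> Gamma_scaled c n \<le> A * sqrt n"
proof -
  obtain A D where D: "0 < D"
    and AD: "\<And>m. 1 \<le> m \<Longrightarrow> D \<le> Gamma_scaled 0 m \<and> Gamma_scaled 0 m \<le> A * sqrt m"
    using Gamma_scaled_0_bounds by blast
  have A: "0 \<le> A" using AD[of 1] D by simp
  have bounds: "D \<le> Gamma_scaled c n \<and> Gamma_scaled c n \<le> (exp (c^2) * A * sqrt 2) * sqrt n"
    if n: "1 \<le> n" "1 - c \<le> n" "c \<le> n" for n
  proof
    show "D \<le> Gamma_scaled c n"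
      using AD[of "n + c"] Gamma_scaled_shift_bounds(1)[of n c] n by simp
    have "Gamma_scaled c n \<le> exp (c^2) * Gamma_scaled 0 (n + c)"
      using n by (intro Gamma_scaled_shift_bounds(2)) auto
    also have "\<dots> \<le> exp (c^2) * (A * sqrt (n + c))"
      using AD[of "n + c"] n by (intro mult_left_mono) auto
    also have "\<dots> \<le> exp (c^2) * (A * (sqrt 2 * sqrt n))"
      using A n by (intro mult_left_mono) (auto simp: real_sqrt_mult [symmetric])
    finally show "Gamma_scaled c n \<le> (exp (c^2) * A * sqrt 2) * sqrt n"
      by (simp add: mult_ac)
  qed
  have "\<forall>\<^sub>F n in at_top. D \<le> Gamma_scaled c n \<and> Gamma_scaled c n \<le> (exp (c^2) * A * sqrt 2) * sqrt n"
    using eventually_ge_at_top[of 1] eventually_ge_at_top[of "1 - c"] eventually_ge_at_top[of c]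
    by eventually_elim (rule bounds)
  with D show ?thesis by (rule that)
qed

lemma norm_le_Re_mult_exp:
  fixes z :: complex assumes z: "0 < Re z"
  shows "norm z \<le> Re z * exp ((Im z)^2 / (2 * (Re z)^2))"
proof (rule power2_le_imp_le)
  have "(norm z)^2 = (Re z)^2 * (1 + (Im z)^2 / (Re z)^2)"
    using z by (simp add: cmod_power2 field_simps)
  also have "\<dots> \<le> (Re z)^2 * exp ((Im z)^2 / (Re z)^2)"
    by (intro mult_left_mono) simp_all
  also have "\<dots> = (Re z * exp ((Im z)^2 / (2 * (Re z)^2)))^2"
    by (simp add: power_mult_distrib exp_double [symmetric] power2_eq_square [of "exp _"])
  finally show "(norm z)^2 \<le> (Re z * exp ((Im z)^2 / (2 * (Re z)^2)))^2" .
qed (use z in simp)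

lemma sum_inverse_squares_le: "(\<Sum>k=0..N. 1 / (real k + 1)^2) \<le> pi^2 / 6"
proof -
  have "(\<lambda>k. 1 / (real k + 1)^2) sums (pi^2 / 6)"
    using inverse_squares_sums by (simp add: add.commute)
  thus ?thesis
    by (metis sums_iff sum_le_suminf finite_atLeastAtMost zero_le_divide_1_iff zero_le_power2)
qed

lemma norm_add_of_nat_le:
  fixes s :: complex assumes s: "1 \<le> Re s"
  shows "norm (s + of_nat k) \<le> Re (s + of_nat k) * exp ((Im s)^2 / (2 * (real k + 1)^2))"
proof -
  have "(real k + 1)^2 \<le> (Re (s + of_nat k))^2"
    using s by (intro power_mono) auto
  hence "(Im s)^2 / (2 * (Re (s + of_nat k))^2) \<le> (Im s)^2 / (2 * (real k + 1)^2)"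
    using s by (intro divide_left_mono) (auto intro!: mult_pos_pos)
  hence "Re (s + of_nat k) * exp ((Im s)^2 / (2 * (Re (s + of_nat k))^2))
         \<le> Re (s + of_nat k) * exp ((Im s)^2 / (2 * (real k + 1)^2))"
    using s by (intro mult_left_mono) auto
  moreover have "norm (s + of_nat k) \<le> Re (s + of_nat k) * exp ((Im s)^2 / (2 * (Re (s + of_nat k))^2))"
    using norm_le_Re_mult_exp[of "s + of_nat k"] s by simp
  ultimately show ?thesis by linarith
qed

lemma norm_pochhammer_bounds:
  fixes s :: complex assumes s: "1 \<le> Re s"
  shows "pochhammer (Re s) (Suc N) \<le> norm (pochhammer s (Suc N))"
    and "norm (pochhammer s (Suc N)) \<le> exp (pi^2 / 12 * (Im s)^2) * pochhammer (Re s) (Suc N)"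
proof -
  have P: "norm (pochhammer s (Suc N)) = (\<Prod>k=0..N. norm (s + of_nat k))"
    by (simp add: pochhammer_Suc_prod prod_norm)
  have R: "pochhammer (Re s) (Suc N) = (\<Prod>k=0..N. Re (s + of_nat k))"
    by (simp add: pochhammer_Suc_prod)
  show "pochhammer (Re s) (Suc N) \<le> norm (pochhammer s (Suc N))"
    unfolding P R by (intro prod_mono conjI complex_Re_le_cmod) (use s in auto)
  have "(Im s)^2 / 2 * (\<Sum>k=0..N. 1 / (real k + 1)^2) \<le> (Im s)^2 / 2 * (pi^2 / 6)"
    by (intro mult_left_mono sum_inverse_squares_le) auto
  hence sq: "(\<Sum>k=0..N. (Im s)^2 / (2 * (real k + 1)^2)) \<le> pi^2 / 12 * (Im s)^2"
    by (simp add: sum_distrib_left mult.commute)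
  have "norm (pochhammer s (Suc N)) \<le> (\<Prod>k=0..N. Re (s + of_nat k) * exp ((Im s)^2 / (2 * (real k + 1)^2)))"
    unfolding P using s by (intro prod_mono conjI norm_add_of_nat_le) auto
  also have "\<dots> = pochhammer (Re s) (Suc N) * exp (\<Sum>k=0..N. (Im s)^2 / (2 * (real k + 1)^2))"
    unfolding R by (simp add: prod.distrib exp_sum)
  also have "\<dots> \<le> pochhammer (Re s) (Suc N) * exp (pi^2 / 12 * (Im s)^2)"
    using sq s by (intro mult_left_mono pochhammer_nonneg) auto
  finally show "norm (pochhammer s (Suc N)) \<le> exp (pi^2 / 12 * (Im s)^2) * pochhammer (Re s) (Suc N)"
    by (simp add: mult.commute)
qed

lemma norm_Gamma_bounds:
  fixes s :: complex assumes s: "1 \<le> Re s"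
  shows "norm (Gamma s) \<le> Gamma (Re s)"
    and "Gamma (Re s) \<le> exp (pi^2 / 12 * (Im s)^2) * norm (Gamma s)"
proof -
  have P: "0 < pochhammer (Re s) (Suc N)" for N
    using s by (intro pochhammer_pos) auto
  have "pochhammer s (Suc N) \<noteq> 0" for N
    using P[of N] norm_pochhammer_bounds(1)[OF s, of N] by (cases "pochhammer s (Suc N) = 0") auto
  hence GS: "norm (Gamma_series s N) * norm (pochhammer s (Suc N))
            = Gamma_series (Re s) N * pochhammer (Re s) (Suc N)" for N
    using P[of N] by (simp add: Gamma_series_def norm_divide norm_mult norm_fact)
  have lim_s: "(\<lambda>N. norm (Gamma_series s N)) \<longlonglongrightarrow> norm (Gamma s)"
    by (intro tendsto_intros)
  have lim_Re: "Gamma_series (Re s) \<longlonglongrightarrow> Gamma (Re s)"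
    by (rule Gamma_series_LIMSEQ)
  show "norm (Gamma s) \<le> Gamma (Re s)"
  proof (rule tendsto_le[OF trivial_limit_sequentially lim_Re lim_s], intro always_eventually allI)
    fix N
    have "norm (Gamma_series s N) * pochhammer (Re s) (Suc N) \<le> Gamma_series (Re s) N * pochhammer (Re s) (Suc N)"
      unfolding GS [symmetric] using norm_pochhammer_bounds(1)[OF s, of N]
      by (intro mult_left_mono) auto
    thus "norm (Gamma_series s N) \<le> Gamma_series (Re s) N"
      using P[of N] by simp
  qed
  show "Gamma (Re s) \<le> exp (pi^2 / 12 * (Im s)^2) * norm (Gamma s)"
  proof (rule tendsto_le[OF trivial_limit_sequentially tendsto_mult_left[OF lim_s] lim_Re], intro always_eventually allI)
    fix N
    have "Gamma_series (Re s) N * pochhammer (Re s) (Suc N)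
          \<le> norm (Gamma_series s N) * (exp (pi^2 / 12 * (Im s)^2) * pochhammer (Re s) (Suc N))"
      unfolding GS [symmetric] using norm_pochhammer_bounds(2)[OF s, of N]
      by (intro mult_left_mono) auto
    thus "Gamma_series (Re s) N \<le> exp (pi^2 / 12 * (Im s)^2) * norm (Gamma_series s N)"
      using P[of N] by (simp add: mult_ac)
  qed
qed

lemma interior_Re_halfspace_ge: "interior {u :: complex. c \<le> Re u} = {u. c < Re u}"
proof -
  have "{u :: complex. c \<le> Re u} = {u. c \<le> 1 \<bullet> u}" "{u :: complex. c < Re u} = {u. c < 1 \<bullet> u}"
    by (simp_all add: inner_complex_def)
  thus ?thesis by (simp only:) (rule interior_halfspace_ge, simp)
qed

lemma tendsto_integral_truncated:
  fixes g :: "real \<Rightarrow> 'a :: euclidean_space"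
  assumes g: "g absolutely_integrable_on {0..}" and L: "filterlim L at_top sequentially"
  shows "(\<lambda>k. integral {0..L k} g) \<longlonglongrightarrow> integral {0..} g"
proof -
  define f where "f k x = (if x \<in> {..L k} then g x else 0)" for k x
  have gi: "g integrable_on {0..}" and ngi: "(\<lambda>x. norm (g x)) integrable_on {0..}"
    using g by (simp_all add: absolutely_integrable_on_def)
  have Int: "{..L k} \<inter> {0..} = {0..L k}" for k by auto
  have fi: "f k integrable_on {0..}" for k
  proof -
    have "g integrable_on ({..L k} \<inter> {0..})"
      unfolding Int by (rule integrable_on_subinterval[OF gi]) auto
    thus ?thesis unfolding f_def integrable_on_def has_integral_restrict_Int [symmetric] .
  qed
  have fe: "integral {0..} (f k) = integral {0..L k} g" for k
    unfolding f_def integral_restrict_Int Int ..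
  have "(\<lambda>k. f k x) \<longlonglongrightarrow> g x" for x
  proof -
    have "eventually (\<lambda>k. x \<le> L k) sequentially" using L by (auto simp: filterlim_at_top)
    hence "eventually (\<lambda>k. g x = f k x) sequentially" by eventually_elim (auto simp: f_def)
    thus ?thesis by (rule Lim_transform_eventually[OF tendsto_const])
  qed
  hence "(\<lambda>k. integral {0..} (f k)) \<longlonglongrightarrow> integral {0..} g"
    by (intro dominated_convergence(2)[OF fi ngi]) (auto simp: f_def)
  thus ?thesis unfolding fe .
qed

lemma has_contour_integral_linepath_0_iff:
  fixes f :: "complex \<Rightarrow> complex"
  assumes r: "0 < r"
  shows "(f has_contour_integral I) (linepath 0 (of_real r * q)) \<longleftrightarrow>
           ((\<lambda>t. f (of_real t * q) * q) has_integral I) {0..r}"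
proof -
  have "((\<lambda>t. f (of_real t * q) * q) has_integral I) (cbox 0 r) \<longleftrightarrow>
          ((\<lambda>x. f (of_real (r * x) * q) * q) has_integral I /\<^sub>R r) {0..1}"
    using has_integral_affinity_iff[of r "\<lambda>t. f (of_real t * q) * q" 0 I 0 r] r by simp
  also have "\<dots> \<longleftrightarrow> ((\<lambda>x. r *\<^sub>R (f (of_real (r * x) * q) * q)) has_integral r *\<^sub>R (I /\<^sub>R r)) {0..1}"
    using r by (subst has_integral_cmul_iff) auto
  also have "\<dots> \<longleftrightarrow> ((\<lambda>x. f (linepath 0 (of_real r * q) x) * (of_real r * q - 0)) has_integral I) {0..1}"
    using r by (intro arg_cong2[where f="\<lambda>a b. (a has_integral b) {0..1}"])
       (auto simp: linepath_def scaleR_conv_of_real fun_eq_iff algebra_simps)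
  also have "\<dots> \<longleftrightarrow> (f has_contour_integral I) (linepath 0 (of_real r * q))"
    by (simp add: has_contour_integral_linepath)
  finally show ?thesis by simp
qed

lemma contour_integral_linepath_triangle:
  assumes S: "convex S" "continuous_on S f" "f holomorphic_on interior S"
    and abc: "a \<in> S" "b \<in> S" "c \<in> S"
  shows "contour_integral (linepath a c) f = contour_integral (linepath a b) f + contour_integral (linepath b c) f"
proof -
  define I where "I x y = contour_integral (linepath x y) f" for x y
  have hull: "convex hull {a, b, c} \<subseteq> S"
    using S(1) abc by (intro hull_minimal) auto
  have "(f has_contour_integral 0) (linepath a b +++ linepath b c +++ linepath c a)"
    by (rule Cauchy_theorem_triangle_interior)
       (use hull in \<open>auto intro: continuous_on_subset[OF S(2)] holomorphic_on_subset[OF S(3) interior_mono]\<close>)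
  moreover have seg: "(f has_contour_integral I x y) (linepath x y)" if "x \<in> S" "y \<in> S" for x y
    unfolding I_def using that S
    by (intro has_contour_integral_integral contour_integrable_continuous_linepath
        continuous_on_subset[OF S(2)] closed_segment_subset) auto
  have "(f has_contour_integral I a b + (I b c + I c a)) (linepath a b +++ linepath b c +++ linepath c a)"
    using abc by (intro has_contour_integral_join valid_path_join valid_path_linepath seg) auto
  ultimately have "I a b + (I b c + I c a) = 0"
    by (rule has_contour_integral_unique [symmetric])
  moreover have "I c a = - I a c"
    unfolding I_def using S abc
    by (intro contour_integral_reverse_linepath continuous_on_subset[OF S(2)] closed_segment_subset) auto
  ultimately show ?thesis by (simp add: I_def algebra_simps)
qed

definition Gamma_integrand :: "complex \<Rightarrow> complex \<Rightarrow> complex" where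
  "Gamma_integrand a u = exp (-u) * u powr a"

lemma Gamma_integrand_analytic:
  assumes "0 < Re a"
  shows "continuous_on {u. 0 \<le> Re u} (Gamma_integrand a)"
    and "Gamma_integrand a holomorphic_on interior {u. 0 \<le> Re u}"
  unfolding Gamma_integrand_def interior_Re_halfspace_ge using assms
  by (auto intro!: continuous_intros holomorphic_intros simp: complex_nonpos_Reals_iff)

lemma norm_Gamma_integrand_le:
  assumes "R \<le> Re u" "norm u \<le> M" "0 \<le> Re a"
  shows "norm (Gamma_integrand a u) \<le> exp (-R) * (M powr Re a * exp (\<bar>Im a\<bar> * pi))"
proof -
  have "\<bar>Im a * Arg u\<bar> \<le> \<bar>Im a\<bar> * pi"
    using Arg_le_pi[of u] mpi_less_Arg[of u] by (simp add: abs_mult mult_left_mono)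
  hence "exp (- Im a * Arg u) \<le> exp (\<bar>Im a\<bar> * pi)" by simp
  moreover have "norm (Gamma_integrand a u) = exp (- Re u) * (norm u powr Re a * exp (- Im a * Arg u))"
    by (simp add: Gamma_integrand_def norm_mult norm_powr_complex)
  ultimately show ?thesis
    using assms by (auto intro!: mult_mono powr_mono2)
qed

lemma contour_integral_Gamma_integrand_ray:
  assumes r: "0 < r" and q: "0 \<le> Re q" and a: "0 < Re a"
  shows "contour_integral (linepath 0 (of_real r * q)) (Gamma_integrand a)
           = integral {0..r} (\<lambda>t. Gamma_integrand a (of_real t * q) * q)"
proof -
  have "closed_segment 0 (of_real r * q) \<subseteq> {u. 0 \<le> Re u}"
    using r q by (intro closed_segment_subset convex_halfspace_Re_ge) auto
  hence "(Gamma_integrand a has_contour_integral contour_integral (linepath 0 (of_real r * q)) (Gamma_integrand a))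
           (linepath 0 (of_real r * q))"
    by (intro has_contour_integral_integral contour_integrable_continuous_linepath
        continuous_on_subset[OF Gamma_integrand_analytic(1)[OF a]])
  hence "((\<lambda>t. Gamma_integrand a (of_real t * q) * q)
           has_integral contour_integral (linepath 0 (of_real r * q)) (Gamma_integrand a)) {0..r}"
    using r by (subst (asm) has_contour_integral_linepath_0_iff)
  thus ?thesis by (rule integral_unique [symmetric])
qed

lemma norm_contour_integral_Gamma_integrand_le:
  assumes R: "0 < R" "Re q = R" and a: "0 < Re a"
  shows "norm (contour_integral (linepath (of_real R) q) (Gamma_integrand a))
           \<le> exp (-R) * (norm q powr Re a * exp (\<bar>Im a\<bar> * pi)) * (2 * norm q)"
proof -
  define B where "B = exp (-R) * (norm q powr Re a * exp (\<bar>Im a\<bar> * pi))"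
  have Rq: "R \<le> norm q" using R complex_Re_le_cmod[of q] by simp
  have seg: "closed_segment (of_real R) q \<subseteq> {u. R \<le> Re u} \<inter> cball 0 (norm q)"
    using R Rq by (intro closed_segment_subset convex_Int convex_halfspace_Re_ge) auto
  have "norm (contour_integral (linepath (of_real R) q) (Gamma_integrand a)) \<le> B * norm (q - of_real R)"
  proof (rule contour_integral_bound_linepath)
    show "Gamma_integrand a contour_integrable_on linepath (of_real R) q"
      using seg R by (intro contour_integrable_continuous_linepath
          continuous_on_subset[OF Gamma_integrand_analytic(1)[OF a]]) auto
    show "norm (Gamma_integrand a u) \<le> B" if "u \<in> closed_segment (of_real R) q" for u
      unfolding B_def using that seg a by (intro norm_Gamma_integrand_le) auto
  qed (simp add: B_def)
  also have "\<dots> \<le> B * (2 * norm q)"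
    using norm_triangle_ineq4[of q "of_real R"] R Rq by (intro mult_left_mono) (auto simp: B_def)
  finally show ?thesis unfolding B_def .
qed

lemma absolutely_integrable_exp_mult_powr:
  fixes p a :: complex assumes p: "0 < Re p" and a: "0 < Re a"
  shows "(\<lambda>t::real. exp (- (of_real t * p)) * of_real t powr a) absolutely_integrable_on {0..}"
proof (rule measurable_bounded_by_integrable_imp_absolutely_integrable)
  show "(\<lambda>t::real. exp (- (of_real t * p)) * of_real t powr a) \<in> borel_measurable (lebesgue_on {0..})"
    using a by (intro continuous_imp_measurable_on_sets_lebesgue continuous_intros) auto
  have "(\<lambda>t. norm (complex_of_real t powr (of_real (Re a + 1) - 1) / of_real (exp (Re p * t))))
          integrable_on {0<..}"
    using absolutely_integrable_Gamma_integral[of "of_real (Re a + 1)" "Re p"] a p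
    by (simp add: absolutely_integrable_on_def)
  hence "(\<lambda>t::real. t powr Re a * exp (- (Re p * t))) integrable_on {0<..}"
    by (rule integrable_eq) (auto simp: norm_divide norm_powr_real_powr exp_minus field_simps)
  moreover have "{0::real..} = insert 0 {0<..}" by auto
  ultimately show "(\<lambda>t::real. t powr Re a * exp (- (Re p * t))) integrable_on {0..}"
    by (simp only: integrable_on_insert_iff)
  fix t :: real assume "t \<in> {0..}"
  thus "norm (exp (- (of_real t * p)) * of_real t powr a) \<le> t powr Re a * exp (- (Re p * t))"
    by (simp add: norm_mult norm_powr_complex Arg_of_real mult.commute)
qed simp

lemma powr_mult_exp_tendsto_0:
  fixes b c :: real assumes c: "0 < c"
  shows "((\<lambda>x. x powr b * exp (- (c * x))) \<longlongrightarrow> 0) at_top"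
proof (rule Lim_null_comparison)
  have "((\<lambda>x. b * (ln x / x)) \<longlongrightarrow> b * 0) at_top"
    by (intro tendsto_intros ln_x_over_x_tendsto_0)
  hence "\<forall>\<^sub>F x in at_top. b * (ln x / x) < c / 2"
    using c by (intro order_tendstoD) auto
  thus "\<forall>\<^sub>F x in at_top. norm (x powr b * exp (- (c * x))) \<le> exp (- (c / 2) * x)"
    using eventually_gt_at_top[of 0]
  proof eventually_elim
    case (elim x)
    hence "exp (b * ln x - c * x) \<le> exp (- (c / 2) * x)" by (simp add: field_simps)
    moreover have "norm (x powr b * exp (- (c * x))) = exp (b * ln x - c * x)"
      using elim by (simp add: powr_def exp_diff exp_minus field_simps)
    ultimately show ?case by simp
  qed
  show "((\<lambda>x. exp (- (c / 2) * x)) \<longlongrightarrow> 0) at_top"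
    using c by (intro filterlim_compose[OF exp_at_bot] filterlim_tendsto_neg_mult_at_bot[OF tendsto_const]
        filterlim_ident) auto
qed

lemma eventually_less_powr_minus:
  fixes A r :: real assumes r: "0 < r" "r < 1"
  shows "\<forall>\<^sub>F n in at_top. A * sqrt n < r powr (- n)"
proof -
  have "((\<lambda>n. A * (n powr (1/2) * exp (- (- ln r * n)))) \<longlongrightarrow> 0) at_top"
    using r by (intro tendsto_mult_right_zero powr_mult_exp_tendsto_0) simp
  hence "\<forall>\<^sub>F n in at_top. A * (n powr (1/2) * exp (- (- ln r * n))) < 1"
    by (rule order_tendstoD) simp
  thus ?thesis
    using eventually_gt_at_top[of 0]
  proof eventually_elim
    case (elim n)
    hence "A * sqrt n * exp (n * ln r) < 1"
      by (simp add: powr_half_sqrt mult_ac)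
    hence "A * sqrt n < 1 / exp (n * ln r)"
      by (simp add: field_simps)
    also have "1 / exp (n * ln r) = r powr (- n)"
      using r by (simp add: powr_def exp_minus divide_inverse)
    finally show ?case .
  qed
qed

lemma Gamma_integrand_rotation_split:
  assumes r: "0 < r" and p: "0 < Re p" and a: "0 < Re a"
  shows "integral {0..r} (\<lambda>t. exp (- (of_real t * p)) * of_real t powr a) * p powr (a + 1)
         = integral {0..r * Re p} (\<lambda>t. Gamma_integrand a (of_real t))
           + contour_integral (linepath (of_real (r * Re p)) (of_real r * p)) (Gamma_integrand a)"
proof -
  let ?f = "Gamma_integrand a"
  have fg: "?f (of_real t * p) * p = exp (- (of_real t * p)) * of_real t powr a * p powr (a + 1)"
    if "t \<in> {0..r}" for t
  proof -
    have "(of_real t * p) powr a = of_real t powr a * p powr a"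
      using that by (intro powr_times_real_left) auto
    with p show ?thesis by (simp add: Gamma_integrand_def powr_add mult_ac)
  qed
  have "contour_integral (linepath 0 (of_real r * p)) ?f = integral {0..r} (\<lambda>t. ?f (of_real t * p) * p)"
    using contour_integral_Gamma_integrand_ray[of r p a] r p a by simp
  also have "\<dots> = integral {0..r} (\<lambda>t. exp (- (of_real t * p)) * of_real t powr a * p powr (a + 1))"
    by (rule integral_cong) (rule fg)
  also have "\<dots> = integral {0..r} (\<lambda>t. exp (- (of_real t * p)) * of_real t powr a) * p powr (a + 1)"
    by (rule integral_mult_left)
  finally have "contour_integral (linepath 0 (of_real r * p)) ?f
      = integral {0..r} (\<lambda>t. exp (- (of_real t * p)) * of_real t powr a) * p powr (a + 1)" .
  moreover have "contour_integral (linepath 0 (of_real (r * Re p))) ?f = integral {0..r * Re p} (\<lambda>t. ?f (of_real t))"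
    using contour_integral_Gamma_integrand_ray[of "r * Re p" 1 a] r p a by simp
  moreover have "contour_integral (linepath 0 (of_real r * p)) ?f
      = contour_integral (linepath 0 (of_real (r * Re p))) ?f
        + contour_integral (linepath (of_real (r * Re p)) (of_real r * p)) ?f"
    using r p Gamma_integrand_analytic[OF a]
    by (intro contour_integral_linepath_triangle[of "{u. 0 \<le> Re u}"] convex_halfspace_Re_ge) auto
  ultimately show ?thesis by simp
qed

lemma has_integral_exp_mult_powr:
  fixes p a :: complex assumes p: "0 < Re p" and a: "0 < Re a"
  shows "((\<lambda>t::real. exp (- (of_real t * p)) * of_real t powr a)
           has_integral p powr (-(a + 1)) * Gamma (a + 1)) {0..}"
proof -
  let ?f = "Gamma_integrand a"
  define g where "g t = exp (- (of_real t * p)) * of_real t powr a" for t :: real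
  define E where "E k = contour_integral (linepath (of_real (real k * Re p)) (of_real (real k) * p)) ?f"
    for k :: nat
  define C where "C = exp (\<bar>Im a\<bar> * pi) * cmod p powr Re a * (2 * cmod p)"
  have gabs: "g absolutely_integrable_on {0..}"
    unfolding g_def using p a by (rule absolutely_integrable_exp_mult_powr)
  have fabs: "(\<lambda>t. ?f (of_real t)) absolutely_integrable_on {0..}"
    using absolutely_integrable_exp_mult_powr[of 1 a] a by (simp add: Gamma_integrand_def)
  have "((\<lambda>t. of_real t powr (a + 1 - 1) / of_real (exp t)) has_integral Gamma (a + 1)) {0..}"
    using a by (intro Gamma_integral_complex) auto
  hence "integral {0..} (\<lambda>t. ?f (of_real t)) = Gamma (a + 1)"
    by (intro integral_unique, rule has_integral_eq[rotated])
       (simp add: Gamma_integrand_def exp_minus field_simps exp_of_real)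
  moreover have "filterlim (\<lambda>k. real k * Re p) at_top sequentially"
    using filterlim_tendsto_pos_mult_at_top[OF tendsto_const p filterlim_real_sequentially]
    by (simp add: mult.commute)
  ultimately have lim_real: "(\<lambda>k. integral {0..real k * Re p} (\<lambda>t. ?f (of_real t))) \<longlonglongrightarrow> Gamma (a + 1)"
    using tendsto_integral_truncated[OF fabs] by simp
  have "norm (E k) \<le> C * (real k powr (Re a + 1) * exp (- (Re p * real k)))" if "1 \<le> k" for k
  proof -
    have "norm (E k) \<le> exp (- (real k * Re p)) * (norm (of_real (real k) * p) powr Re a
            * exp (\<bar>Im a\<bar> * pi)) * (2 * norm (of_real (real k) * p))"
      unfolding E_def using that p a by (intro norm_contour_integral_Gamma_integrand_le) auto
    also have "\<dots> = C * (real k powr (Re a + 1) * exp (- (Re p * real k)))"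
      using that by (simp add: C_def norm_mult powr_mult powr_add mult_ac)
    finally show ?thesis .
  qed
  hence "\<forall>\<^sub>F k in sequentially. norm (E k) \<le> C * (real k powr (Re a + 1) * exp (- (Re p * real k)))"
    by (rule eventually_sequentiallyI)
  moreover have "(\<lambda>k. C * (real k powr (Re a + 1) * exp (- (Re p * real k)))) \<longlonglongrightarrow> 0"
    using powr_mult_exp_tendsto_0[OF p]
    by (intro tendsto_mult_right_zero filterlim_compose[OF _ filterlim_real_sequentially])
  ultimately have "E \<longlonglongrightarrow> 0"
    by (rule Lim_null_comparison)
  with lim_real have "(\<lambda>k. integral {0..real k * Re p} (\<lambda>t. ?f (of_real t)) + E k) \<longlonglongrightarrow> Gamma (a + 1) + 0"
    by (rule tendsto_add)
  moreover have "\<forall>\<^sub>F k in sequentially. integral {0..real k * Re p} (\<lambda>t. ?f (of_real t)) + E k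
      = integral {0..real k} g * p powr (a + 1)"
    unfolding E_def g_def using p a
    by (intro eventually_sequentiallyI[of 1]) (simp add: Gamma_integrand_rotation_split)
  ultimately have "(\<lambda>k. integral {0..real k} g * p powr (a + 1)) \<longlonglongrightarrow> Gamma (a + 1)"
    by (simp add: Lim_transform_eventually)
  moreover have "(\<lambda>k. integral {0..real k} g * p powr (a + 1)) \<longlonglongrightarrow> integral {0..} g * p powr (a + 1)"
    by (intro tendsto_mult_right tendsto_integral_truncated[OF gabs] filterlim_real_sequentially)
  ultimately have lim: "integral {0..} g * p powr (a + 1) = Gamma (a + 1)"
    by (simp add: LIMSEQ_unique)
  have "integral {0..} g = integral {0..} g * (p powr (a + 1) * p powr (-(a + 1)))"
    using p by (auto simp: powr_add [symmetric])
  also have "\<dots> = p powr (-(a + 1)) * Gamma (a + 1)"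
    by (simp only: mult.assoc [symmetric] lim mult.commute)
  finally show ?thesis
    using gabs unfolding g_def [symmetric] absolutely_integrable_on_def by (metis has_integral_integral)
qed

definition S_integrand :: "real \<Rightarrow> complex \<Rightarrow> complex \<Rightarrow> real \<Rightarrow> complex" where
  "S_integrand n w v t = exp (of_real n * w * (1 - of_real t)) * of_real t powr (of_real n + v)"

definition Gamma_term :: "real \<Rightarrow> complex \<Rightarrow> complex \<Rightarrow> complex" where
  "Gamma_term n w v = exp (of_real n * w) * nw_pow n w v * Gamma (of_real n + v + 1)"

lemma S_fun_eq: "S_fun n w v = 1 + of_real n * w * integral {0..1} (S_integrand n w v)"
  unfolding S_fun_def S_integrand_def ..

lemma T_fun_eq: "T_fun n w v = Gamma_term n w v - S_fun n w v"
  unfolding T_fun_def Gamma_term_def ..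

lemma nw_pow_eq_powr:
  assumes "0 < n" "w \<noteq> 0"
  shows "nw_pow n w v = (of_real n * w) powr (- (of_real n + v))"
proof -
  have "Ln (of_real n * w) = of_real (ln n) + Ln w"
    using Ln_times_of_real[of n w] assms by (simp add: Ln_of_real)
  thus ?thesis
    using assms by (simp add: nw_pow_def powr_def exp_add [symmetric] algebra_simps)
qed

lemma norm_S_integrand:
  assumes "0 \<le> t"
  shows "norm (S_integrand n w v t) = exp (n * Re w * (1 - t)) * t powr (n + Re v)"
proof -
  have "of_real n * w * (1 - of_real t) = of_real (n * (1 - t)) * w" by (simp add: algebra_simps)
  hence "Re (of_real n * w * (1 - of_real t)) = n * Re w * (1 - t)" by simp
  moreover have "norm (of_real t powr (of_real n + v)) = t powr (n + Re v)"
    using assms by (subst norm_powr_real_powr) auto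
  ultimately show ?thesis by (simp add: S_integrand_def norm_mult)
qed

lemma has_integral_exp_mult_powr_real:
  assumes n: "0 < n" and m: "0 < n + c"
  shows "((\<lambda>t. exp (n * (1 - t)) * t powr (n + c)) has_integral Gamma_scaled c n / n) {0..}"
proof -
  have "((\<lambda>t::real. exp (- (of_real t * of_real n)) * of_real t powr of_real (n + c))
          has_integral (of_real n) powr (- (of_real (n + c) + 1)) * Gamma (of_real (n + c) + 1 :: complex)) {0..}"
    using n m by (intro has_integral_exp_mult_powr) auto
  also have "(of_real n) powr (- (of_real (n + c) + 1)) * Gamma (of_real (n + c) + 1 :: complex)
      = of_real (n powr (- (n + c + 1)) * Gamma (n + c + 1))"
    using n by (simp add: powr_of_real [symmetric] Gamma_complex_of_real [symmetric])
  finally have "((\<lambda>t::real. complex_of_real (exp (- (t * n)) * t powr (n + c)))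
      has_integral complex_of_real (n powr (- (n + c + 1)) * Gamma (n + c + 1))) {0..}"
    by (rule has_integral_eq[rotated])
       (auto simp: powr_of_real exp_of_real simp flip: of_real_mult of_real_minus of_real_add)
  from has_integral_linear[OF this bounded_linear_Re]
  have "((\<lambda>t. exp (- (t * n)) * t powr (n + c)) has_integral n powr (- (n + c + 1)) * Gamma (n + c + 1)) {0..}"
    by (simp add: o_def)
  from has_integral_mult_right[OF this, of "exp n"]
  have "((\<lambda>t. exp n * (exp (- (t * n)) * t powr (n + c))) has_integral
          exp n * (n powr (- (n + c + 1)) * Gamma (n + c + 1))) {0..}" .
  moreover have "exp n * (exp (- (t * n)) * t powr (n + c)) = exp (n * (1 - t)) * t powr (n + c)" for t
    by (simp add: exp_add [symmetric] algebra_simps)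
  moreover have "n powr (- (n + c + 1)) = n powr (- (n + c)) / n"
  proof -
    have "- (n + c + 1) = - (n + c) - 1" by simp
    hence "n powr (- (n + c + 1)) = n powr (- (n + c) - 1)" by (simp only:)
    also have "\<dots> = n powr (- (n + c)) / n" by (subst powr_diff) (use n in simp)
    finally show ?thesis .
  qed
  ultimately show ?thesis
    by (simp add: Gamma_scaled_def mult.assoc)
qed

lemma norm_integral_S_integrand_le:
  assumes n: "0 < n" "0 < n + Re v"
    and I: "I \<in> sets lebesgue" "I \<subseteq> {0..}" "S_integrand n w v integrable_on I"
    and sign: "\<And>t. t \<in> I \<Longrightarrow> (Re w - 1) * (1 - t) \<le> 0"
  shows "n * norm (integral I (S_integrand n w v)) \<le> Gamma_scaled (Re v) n"
proof -
  define h where "h t = exp (n * (1 - t)) * t powr (n + Re v)" for t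
  have hI: "(h has_integral Gamma_scaled (Re v) n / n) {0..}"
    unfolding h_def using n by (rule has_integral_exp_mult_powr_real)
  hence "h absolutely_integrable_on {0..}"
    by (intro nonnegative_absolutely_integrable_1 has_integral_integrable) (auto simp: h_def)
  hence hI': "h integrable_on I"
    using I by (metis absolutely_integrable_on_def set_integrable_subset)
  have "norm (integral I (S_integrand n w v)) \<le> integral I h"
  proof (rule integral_norm_bound_integral[OF I(3) hI'])
    fix t assume t: "t \<in> I"
    have "n * ((Re w - 1) * (1 - t)) \<le> 0"
      using sign[OF t] n by (simp add: mult_nonneg_nonpos)
    hence "n * Re w * (1 - t) \<le> n * (1 - t)"
      by (simp add: algebra_simps)
    moreover have "0 \<le> t" using t I(2) by auto
    ultimately show "norm (S_integrand n w v t) \<le> h t"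
      by (auto simp: norm_S_integrand h_def intro!: mult_right_mono)
  qed
  also have "\<dots> \<le> integral {0..} h"
    using I hI' hI by (intro integral_subset_le) (auto simp: h_def)
  also have "\<dots> = Gamma_scaled (Re v) n / n"
    using hI by (rule integral_unique)
  finally show ?thesis
    using n by (simp add: field_simps)
qed

lemma norm_S_fun_le:
  assumes n: "0 < n" "0 < n + Re v" and w: "Re w \<le> 1"
  shows "norm (S_fun n w v) \<le> 1 + cmod w * Gamma_scaled (Re v) n"
proof -
  have "S_integrand n w v integrable_on {0..1}"
    unfolding S_integrand_def using n by (intro integrable_continuous_interval continuous_intros) auto
  hence "n * norm (integral {0..1} (S_integrand n w v)) \<le> Gamma_scaled (Re v) n"
    using n w by (intro norm_integral_S_integrand_le) (auto intro!: mult_nonpos_nonneg)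
  moreover have "norm (S_fun n w v) \<le> norm (1 :: complex) + norm (of_real n * w * integral {0..1} (S_integrand n w v))"
    unfolding S_fun_eq by (rule norm_triangle_ineq)
  hence "norm (S_fun n w v) \<le> 1 + cmod w * (n * norm (integral {0..1} (S_integrand n w v)))"
    using n by (simp add: norm_mult mult_ac)
  ultimately show ?thesis
    by (meson add_left_mono mult_left_mono norm_ge_zero order_trans)
qed

lemma has_integral_S_integrand:
  assumes n: "0 < n" "0 < n + Re v" and w: "0 < Re w"
  shows "S_integrand n w v absolutely_integrable_on {0..}"
    and "(S_integrand n w v has_integral Gamma_term n w v / (of_real n * w)) {0..}"
proof -
  define p a where "p = of_real n * w" and "a = of_real n + v"
  have p: "0 < Re p" "p \<noteq> 0" and a: "0 < Re a"
    using n w by (auto simp: p_def a_def)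
  have F: "S_integrand n w v = (\<lambda>t. exp p * (exp (- (of_real t * p)) * of_real t powr a))"
  proof
    fix t :: real
    have "exp p * exp (- (of_real t * p)) = exp (of_real n * w * (1 - of_real t))"
      by (simp only: exp_add [symmetric]) (simp add: p_def algebra_simps)
    thus "S_integrand n w v t = exp p * (exp (- (of_real t * p)) * of_real t powr a)"
      by (simp add: S_integrand_def a_def mult.assoc [symmetric])
  qed
  show "S_integrand n w v absolutely_integrable_on {0..}"
    unfolding F using absolutely_integrable_exp_mult_powr[OF p(1) a] by (rule set_integrable_mult_right)
  have "(S_integrand n w v has_integral exp p * (p powr (- (a + 1)) * Gamma (a + 1))) {0..}"
    unfolding F by (intro has_integral_mult_right has_integral_exp_mult_powr p a)
  moreover have "exp p * (p powr (- (a + 1)) * Gamma (a + 1)) = Gamma_term n w v / p"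
  proof -
    have "p * p powr (- (a + 1)) = p powr (- a)"
      using powr_add[of p 1 "- (a + 1)"] p by simp
    moreover have "nw_pow n w v = p powr (- a)"
      unfolding p_def a_def using n w by (intro nw_pow_eq_powr) auto
    ultimately show ?thesis
      using p by (simp add: Gamma_term_def field_simps p_def a_def)
  qed
  ultimately show "(S_integrand n w v has_integral Gamma_term n w v / (of_real n * w)) {0..}"
    by (simp add: p_def)
qed

lemma norm_T_fun_le:
  assumes n: "0 < n" "0 < n + Re v" and w: "1 \<le> Re w"
  shows "norm (T_fun n w v) \<le> 1 + cmod w * Gamma_scaled (Re v) n"
proof -
  let ?F = "S_integrand n w v"
  have w0: "of_real n * w \<noteq> 0" using n w by auto
  have Fabs: "?F absolutely_integrable_on {0..}" and FI: "(?F has_integral Gamma_term n w v / (of_real n * w)) {0..}"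
    using n w by (intro has_integral_S_integrand; simp)+
  have F1: "?F integrable_on {1..}"
    using set_integrable_subset[OF Fabs] by (auto simp: absolutely_integrable_on_def)
  have F01: "?F integrable_on {0..1}"
    using FI by (intro integrable_on_subinterval[OF has_integral_integrable]) auto
  have "(?F has_integral (integral {0..1} ?F + integral {1..} ?F)) ({0..1} \<union> {1..})"
    by (intro has_integral_Un integrable_integral F01 F1) (auto intro: negligible_subset[OF negligible_sing[of 1]])
  moreover have "{0..1} \<union> {1..} = {0::real..}" by auto
  ultimately have "integral {0..1} ?F + integral {1..} ?F = Gamma_term n w v / (of_real n * w)"
    using FI has_integral_unique by metis
  hence T: "T_fun n w v = of_real n * w * integral {1..} ?F - 1"
    using w0 by (simp add: T_fun_eq S_fun_eq field_simps)
  have "n * norm (integral {1..} ?F) \<le> Gamma_scaled (Re v) n"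
    using n w F1 by (intro norm_integral_S_integrand_le) (auto intro!: mult_nonneg_nonpos)
  moreover have "norm (T_fun n w v) \<le> norm (of_real n * w * integral {1..} ?F) + norm (1 :: complex)"
    unfolding T by (rule norm_triangle_ineq4)
  hence "norm (T_fun n w v) \<le> 1 + cmod w * (n * norm (integral {1..} ?F))"
    using n by (simp add: norm_mult mult_ac)
  ultimately show ?thesis
    by (meson add_left_mono mult_left_mono norm_ge_zero order_trans)
qed

lemma norm_Gamma_term:
  assumes n: "0 < n" and w: "w \<noteq> 0"
  shows "norm (Gamma_term n w v) = exp (Im v * Arg w - Re v * ln (cmod w)) * cmod (w * exp (1 - w)) powr (- n)
           * (exp n * n powr (- (n + Re v)) * norm (Gamma (of_real n + v + 1)))"
proof -
  have "cmod (w * exp (1 - w)) = exp (ln (cmod w) + (1 - Re w))"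
    using w by (simp only: norm_mult norm_exp_eq_Re exp_add) simp
  hence r: "cmod (w * exp (1 - w)) powr (- n) = exp (n * (Re w - 1 - ln (cmod w)))"
    by (simp add: powr_def algebra_simps)
  have "norm (exp (- (of_real n + v) * Ln w)) = exp (- (n + Re v) * ln (cmod w) + Im v * Arg w)"
    using w by (simp add: Arg_eq_Im_Ln algebra_simps)
  hence "norm (Gamma_term n w v) = exp (n * Re w) * (exp (- (n + Re v) * ln n)
          * exp (- (n + Re v) * ln (cmod w) + Im v * Arg w)) * norm (Gamma (of_real n + v + 1))"
    unfolding Gamma_term_def nw_pow_def norm_mult by simp
  also have "exp (n * Re w) * (exp (- (n + Re v) * ln n) * exp (- (n + Re v) * ln (cmod w) + Im v * Arg w))
      = exp (Im v * Arg w - Re v * ln (cmod w)) * exp (n * (Re w - 1 - ln (cmod w))) * (exp n * exp (- (n + Re v) * ln n))"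
    by (simp only: exp_add [symmetric] mult.assoc) (simp add: algebra_simps)
  finally show ?thesis
    unfolding r using n by (simp add: powr_def mult.assoc)
qed

lemma norm_Gamma_term_eventually_bounds:
  assumes w: "w \<noteq> 0"
  obtains K M where "0 < K" "0 < M"
    "\<forall>\<^sub>F n in at_top. norm (Gamma_term n w v) \<le> K * cmod (w * exp (1 - w)) powr (- n) * Gamma_scaled (Re v) n
       \<and> K * cmod (w * exp (1 - w)) powr (- n) * Gamma_scaled (Re v) n \<le> M * norm (Gamma_term n w v)"
proof
  define K where "K = exp (Im v * Arg w - Re v * ln (cmod w))"
  show "0 < K" "0 < exp (pi^2 / 12 * (Im v)^2)" by (simp_all add: K_def)
  show "\<forall>\<^sub>F n in at_top. norm (Gamma_term n w v) \<le> K * cmod (w * exp (1 - w)) powr (- n) * Gamma_scaled (Re v) n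
     \<and> K * cmod (w * exp (1 - w)) powr (- n) * Gamma_scaled (Re v) n \<le> exp (pi^2 / 12 * (Im v)^2) * norm (Gamma_term n w v)"
    using eventually_gt_at_top[of 0] eventually_ge_at_top[of "- Re v"]
  proof eventually_elim
    case (elim n)
    have s: "1 \<le> Re (of_real n + v + 1)" using elim by simp
    have E: "0 \<le> K * cmod (w * exp (1 - w)) powr (- n) * (exp n * n powr (- (n + Re v)))"
      by (simp add: K_def)
    show ?case
      using norm_Gamma_term[OF elim(1) w, of v]
        mult_left_mono[OF norm_Gamma_bounds(1)[OF s] E] mult_left_mono[OF norm_Gamma_bounds(2)[OF s] E]
      by (simp add: K_def Gamma_scaled_def mult_ac)
  qed
qed

definition sqrt_bounded :: "(real \<Rightarrow> complex) \<Rightarrow> bool" where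
  "sqrt_bounded f \<longleftrightarrow> (\<exists>C. \<forall>\<^sub>F n in at_top. norm (f n) \<le> C * sqrt n)"

lemma bounded_at_top_div_sqrt_iff:
  "bounded_at_top (\<lambda>n. f n / of_real (sqrt n)) \<longleftrightarrow> sqrt_bounded f"
proof -
  have "(\<forall>\<^sub>F n in at_top. norm (f n / of_real (sqrt n)) \<le> C) \<longleftrightarrow> (\<forall>\<^sub>F n in at_top. norm (f n) \<le> C * sqrt n)"
    for C
  proof
    assume "\<forall>\<^sub>F n in at_top. norm (f n / of_real (sqrt n)) \<le> C"
    thus "\<forall>\<^sub>F n in at_top. norm (f n) \<le> C * sqrt n"
      using eventually_gt_at_top[of 0] by eventually_elim (simp add: norm_divide field_simps)
  next
    assume "\<forall>\<^sub>F n in at_top. norm (f n) \<le> C * sqrt n"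
    thus "\<forall>\<^sub>F n in at_top. norm (f n / of_real (sqrt n)) \<le> C"
      using eventually_gt_at_top[of 0] by eventually_elim (simp add: norm_divide field_simps)
  qed
  thus ?thesis
    unfolding bounded_at_top_def sqrt_bounded_def by simp
qed

lemma sqrt_bounded_norm_le_add:
  assumes "sqrt_bounded g" "sqrt_bounded h"
    and "\<forall>\<^sub>F n in at_top. norm (f n) \<le> norm (g n) + norm (h n)"
  shows "sqrt_bounded f"
proof -
  obtain C D where "\<forall>\<^sub>F n in at_top. norm (g n) \<le> C * sqrt n" "\<forall>\<^sub>F n in at_top. norm (h n) \<le> D * sqrt n"
    using assms(1,2) unfolding sqrt_bounded_def by blast
  with assms(3) have "\<forall>\<^sub>F n in at_top. norm (f n) \<le> (C + D) * sqrt n"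
    by eventually_elim (unfold distrib_right, linarith)
  thus ?thesis unfolding sqrt_bounded_def by blast
qed

lemma sqrt_bounded_diff_cancel:
  assumes g: "sqrt_bounded g"
  shows "sqrt_bounded (\<lambda>n. f n - g n) \<longleftrightarrow> sqrt_bounded f"
proof
  assume "sqrt_bounded (\<lambda>n. f n - g n)"
  with g show "sqrt_bounded f"
    by (rule sqrt_bounded_norm_le_add) (intro always_eventually allI norm_triangle_sub)
next
  assume "sqrt_bounded f"
  from this g show "sqrt_bounded (\<lambda>n. f n - g n)"
    by (rule sqrt_bounded_norm_le_add) (intro always_eventually allI norm_triangle_ineq4)
qed

lemma sqrt_bounded_if_norm_le_Gamma_scaled:
  fixes f :: "real \<Rightarrow> complex"
  assumes f: "\<forall>\<^sub>F n in at_top. norm (f n) \<le> 1 + C * Gamma_scaled c n"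
  shows "sqrt_bounded f"
proof -
  obtain A D where D: "0 < D"
    and AD: "\<forall>\<^sub>F n in at_top. D \<le> Gamma_scaled c n \<and> Gamma_scaled c n \<le> A * sqrt n"
    by (rule Gamma_scaled_eventually_bounds)
  have "\<forall>\<^sub>F n in at_top. norm (f n) \<le> (1 + \<bar>C\<bar> * \<bar>A\<bar>) * sqrt n"
    using f AD eventually_ge_at_top[of 1]
  proof eventually_elim
    case (elim n)
    have "C * Gamma_scaled c n \<le> \<bar>C\<bar> * Gamma_scaled c n"
      using elim D by (intro mult_right_mono) auto
    also have "\<dots> \<le> \<bar>C\<bar> * (\<bar>A\<bar> * sqrt n)"
      using elim by (intro mult_left_mono order_trans[OF _ mult_right_mono[OF abs_ge_self]]) auto
    finally have "norm (f n) \<le> 1 + (\<bar>C\<bar> * \<bar>A\<bar>) * sqrt n"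
      using elim by (simp add: mult.assoc)
    moreover have "1 \<le> sqrt n" using elim by simp
    ultimately show ?case unfolding distrib_right by linarith
  qed
  thus ?thesis unfolding sqrt_bounded_def by blast
qed

lemma not_sqrt_bounded_if_powr_minus_le:
  assumes r: "0 < r" "r < 1" and \<kappa>: "0 < \<kappa>"
    and f: "\<forall>\<^sub>F n in at_top. \<kappa> * r powr (- n) \<le> norm (f n)"
  shows "\<not> sqrt_bounded f"
proof
  assume "sqrt_bounded f"
  then obtain c where c: "\<forall>\<^sub>F n in at_top. norm (f n) \<le> c * sqrt n"
    unfolding sqrt_bounded_def by blast
  have "\<forall>\<^sub>F n in at_top. (c / \<kappa>) * sqrt n < r powr (- n)"
    using r by (rule eventually_less_powr_minus)
  moreover have "\<forall>\<^sub>F n in at_top. r powr (- n) \<le> (c / \<kappa>) * sqrt n"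
    using f c by eventually_elim (use \<kappa> in \<open>simp add: field_simps\<close>)
  ultimately have "\<forall>\<^sub>F n in at_top. r powr (- n) < r powr (- n)"
    by eventually_elim simp
  thus False by simp
qed

lemma Gamma_term_sqrt_bounded_iff:
  assumes w: "w \<noteq> 0"
  shows "sqrt_bounded (\<lambda>n. Gamma_term n w v) \<longleftrightarrow> 1 \<le> cmod (w * exp (1 - w))"
proof -
  define r where "r = cmod (w * exp (1 - w))"
  have r: "0 < r" using w by (simp add: r_def)
  obtain K M where K: "0 < K" and M: "0 < M" and KM:
    "\<forall>\<^sub>F n in at_top. norm (Gamma_term n w v) \<le> K * r powr (- n) * Gamma_scaled (Re v) n
       \<and> K * r powr (- n) * Gamma_scaled (Re v) n \<le> M * norm (Gamma_term n w v)"
    unfolding r_def using w by (rule norm_Gamma_term_eventually_bounds)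
  obtain A D where D: "0 < D"
    and AD: "\<forall>\<^sub>F n in at_top. D \<le> Gamma_scaled (Re v) n \<and> Gamma_scaled (Re v) n \<le> A * sqrt n"
    by (rule Gamma_scaled_eventually_bounds)
  show ?thesis
    unfolding r_def [symmetric]
  proof
    assume bounded: "sqrt_bounded (\<lambda>n. Gamma_term n w v)"
    show "1 \<le> r"
    proof (rule ccontr)
      assume "\<not> 1 \<le> r"
      moreover have "\<forall>\<^sub>F n in at_top. (K * D / M) * r powr (- n) \<le> norm (Gamma_term n w v)"
        using KM AD
      proof eventually_elim
        case (elim n)
        have "K * D * r powr (- n) \<le> K * r powr (- n) * Gamma_scaled (Re v) n"
          using elim K r by (simp add: mult.commute mult.left_commute)
        with elim M show ?case by (simp add: field_simps)
      qed
      ultimately show False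
        using not_sqrt_bounded_if_powr_minus_le[of r "K * D / M"] bounded r K D M by auto
    qed
  next
    assume r1: "1 \<le> r"
    have "\<forall>\<^sub>F n in at_top. norm (Gamma_term n w v) \<le> 1 + K * Gamma_scaled (Re v) n"
      using KM AD eventually_ge_at_top[of 0]
    proof eventually_elim
      case (elim n)
      have "r powr (- n) \<le> 1"
        using r1 elim ge_one_powr_ge_zero[of r n] by (simp add: powr_minus field_simps)
      hence "K * r powr (- n) * Gamma_scaled (Re v) n \<le> K * 1 * Gamma_scaled (Re v) n"
        using elim K D by (intro mult_right_mono mult_left_mono) auto
      thus ?case using elim by simp
    qed
    thus "sqrt_bounded (\<lambda>n. Gamma_term n w v)"
      by (rule sqrt_bounded_if_norm_le_Gamma_scaled)
  qed
qed

lemma S_fun_sqrt_bounded: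
  assumes "Re w \<le> 1"
  shows "sqrt_bounded (\<lambda>n. S_fun n w v)"
proof (rule sqrt_bounded_if_norm_le_Gamma_scaled)
  show "\<forall>\<^sub>F n in at_top. norm (S_fun n w v) \<le> 1 + cmod w * Gamma_scaled (Re v) n"
    using eventually_gt_at_top[of 0] eventually_gt_at_top[of "- Re v"]
    by eventually_elim (use assms in \<open>auto intro: norm_S_fun_le\<close>)
qed

lemma T_fun_sqrt_bounded:
  assumes "1 \<le> Re w"
  shows "sqrt_bounded (\<lambda>n. T_fun n w v)"
proof (rule sqrt_bounded_if_norm_le_Gamma_scaled)
  show "\<forall>\<^sub>F n in at_top. norm (T_fun n w v) \<le> 1 + cmod w * Gamma_scaled (Re v) n"
    using eventually_gt_at_top[of 0] eventually_gt_at_top[of "- Re v"]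
    by eventually_elim (use assms in \<open>auto intro: norm_T_fun_le\<close>)
qed

lemma S_fun_sqrt_bounded_iff: "sqrt_bounded (\<lambda>n. S_fun n w v) \<longleftrightarrow> w \<notin> regionZ"
proof (cases "Re w \<le> 1")
  case True
  thus ?thesis using S_fun_sqrt_bounded by (auto simp: regionZ_def)
next
  case False
  have "sqrt_bounded (\<lambda>n. S_fun n w v) \<longleftrightarrow> sqrt_bounded (\<lambda>n. Gamma_term n w v - T_fun n w v)"
    by (simp add: T_fun_eq)
  also have "\<dots> \<longleftrightarrow> sqrt_bounded (\<lambda>n. Gamma_term n w v)"
    using False by (intro sqrt_bounded_diff_cancel T_fun_sqrt_bounded) simp
  also have "\<dots> \<longleftrightarrow> w \<notin> regionZ"
    using False by (subst Gamma_term_sqrt_bounded_iff) (auto simp: regionZ_def)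
  finally show ?thesis .
qed

lemma T_fun_sqrt_bounded_iff:
  assumes w: "w \<noteq> 0"
  shows "sqrt_bounded (\<lambda>n. T_fun n w v) \<longleftrightarrow> w \<notin> regionY"
proof (cases "1 \<le> Re w")
  case True
  thus ?thesis using T_fun_sqrt_bounded by (auto simp: regionY_def)
next
  case False
  have "sqrt_bounded (\<lambda>n. T_fun n w v) \<longleftrightarrow> sqrt_bounded (\<lambda>n. Gamma_term n w v - S_fun n w v)"
    by (simp add: T_fun_eq)
  also have "\<dots> \<longleftrightarrow> sqrt_bounded (\<lambda>n. Gamma_term n w v)"
    using False by (intro sqrt_bounded_diff_cancel S_fun_sqrt_bounded) simp
  also have "\<dots> \<longleftrightarrow> w \<notin> regionY"
    using False w by (subst Gamma_term_sqrt_bounded_iff) (auto simp: regionY_def)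
  finally show ?thesis .
qed

theorem corollary5p6:
  fixes w v :: complex
  shows "(bounded_at_top (\<lambda>n. S_fun n w v / of_real (sqrt n)) \<longleftrightarrow> w \<notin> regionZ)
       \<and> (w \<noteq> 0 \<longrightarrow> (bounded_at_top (\<lambda>n. T_fun n w v / of_real (sqrt n)) \<longleftrightarrow> w \<notin> regionY))"
  by (simp add: bounded_at_top_div_sqrt_iff S_fun_sqrt_bounded_iff T_fun_sqrt_bounded_iff)

end
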